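(* Let $(N_0,c,w,P)$ be an RS-situation and $(N_0,v)$ the corresponding RS-game. Then $(N_0,v)$ is balanced, i.e. $Core(N_0,v)\neq\emptyset$.
   Context: Let $c\in\mathbb{R}$. An RS-problem is a triple $(c,w,p)$ where $w:\mathbb{R}_+\to(c,+\infty)$ is decreasing (non-increasing) and continuous, and $p:\mathbb{R}_+\to\mathbb{R}$ is decreasing (non-increasing) and continuous, satisfies $p(0)>w(0)$, and there exists $q>0$ with $p(q)=c$. An RS-situation is a tuple $(N_0,c,w,P)$ where $N=\{1,\dots,n\}$ is the set of retailers, $0$ denotes the supplier, $N_0=N\cup\{0\}$, $P=(p_1,\dots,p_n)$, and $(c,w,p_i)$ is an RS-problem for each $i\in N$. For $S\subseteq N$ write $S_0=S\cup\{0\}$. For $q\ge0$ and $\omega\in\mathbb{R}$, $\Pi_i^{ret}(q;\omega)=(p_i(q)-\omega)q$. For nonempty $S\subseteq N$, $(q_i^S)_{i\in S}$ is a fixed optimal solution of: maximize $\sum_{i\in S}(p_i(q_i)-w(q_S))q_i$ over $q\in\mathbb{R}_+^{S}$ subject to $p_i(q_i)\ge w(q_S)$ for all $i\in S$, where $q_S=\sum_{i\in S}q_i$; $q_S^S=\sum_{i\in S}q_i^S$. For $i\in N$, $q_i^c$ is a fixed optimal solution of: maximize $(p_i(q)-c)q$ over $q\ge0$ subject to $p_i(q)\ge c$. The corresponding RS-game $(N_0,v)$ is the TU game on $N_0$ with $v(\emptyset)=0$ and, for all $S\subseteq N$, $v(S)=\sum_{i\in S}\Pi_i^{ret}(q_i^S;w(q_S^S))$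 and $v(S_0)=\sum_{i\in S}\Pi_i^{ret}(q_i^c;c)$. The core is $Core(N_0,v)=\{x\in\mathbb{R}^{N_0}: \sum_{i\in N_0}x_i=v(N_0),\ \sum_{i\in T}x_i\ge v(T)\text{ for all }T\subset N_0\}$; a game is balanced iff its core is nonempty. *)

theory Defs
  imports "HOL-Analysis.Analysis"
begin

(* Players: retailers N = {1..n} and supplier 0, so N0 = {0..n}. *)

definition rs_problem :: "real \<Rightarrow> (real \<Rightarrow> real) \<Rightarrow> (real \<Rightarrow> real) \<Rightarrow> bool" where
  "rs_problem c w p \<longleftrightarrow>
     (\<forall>x\<ge>0. w x > c) \<and> continuous_on {0..} w \<and> (\<forall>x y. 0 \<le> x \<longrightarrow> x \<le> y \<longrightarrow> w y \<le> w x) \<and>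
     continuous_on {0..} p \<and> (\<forall>x y. 0 \<le> x \<longrightarrow> x \<le> y \<longrightarrow> p y \<le> p x) \<and>
     p 0 > w 0 \<and> (\<exists>q>0. p q = c)"

definition rs_situation :: "nat \<Rightarrow> real \<Rightarrow> (real \<Rightarrow> real) \<Rightarrow> (nat \<Rightarrow> real \<Rightarrow> real) \<Rightarrow> bool" where
  "rs_situation n c w P \<longleftrightarrow> (\<forall>i\<in>{1..n}. rs_problem c w (P i))"

definition retailer_profit :: "(real \<Rightarrow> real) \<Rightarrow> real \<Rightarrow> real \<Rightarrow> real" where
  "retailer_profit p q \<omega> = (p q - \<omega>) * q"

definition coal_feasible :: "(real \<Rightarrow> real) \<Rightarrow> (nat \<Rightarrow> real \<Rightarrow> real) \<Rightarrow> nat set \<Rightarrow> (nat \<Rightarrow> real) \<Rightarrow> bool" where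
  "coal_feasible w P S q \<longleftrightarrow> (\<forall>i\<in>S. q i \<ge> 0 \<and> P i (q i) \<ge> w (sum q S))"

definition coal_objective :: "(real \<Rightarrow> real) \<Rightarrow> (nat \<Rightarrow> real \<Rightarrow> real) \<Rightarrow> nat set \<Rightarrow> (nat \<Rightarrow> real) \<Rightarrow> real" where
  "coal_objective w P S q = (\<Sum>i\<in>S. (P i (q i) - w (sum q S)) * q i)"

definition coal_optimal :: "(real \<Rightarrow> real) \<Rightarrow> (nat \<Rightarrow> real \<Rightarrow> real) \<Rightarrow> nat set \<Rightarrow> (nat \<Rightarrow> real) \<Rightarrow> bool" where
  "coal_optimal w P S q \<longleftrightarrow> coal_feasible w P S q \<and>
     (\<forall>q'. coal_feasible w P S q' \<longrightarrow> coal_objective w P S q' \<le> coal_objective w P S q)"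

definition coop_optimal :: "real \<Rightarrow> (real \<Rightarrow> real) \<Rightarrow> real \<Rightarrow> bool" where
  "coop_optimal c p q \<longleftrightarrow> q \<ge> 0 \<and> p q \<ge> c \<and>
     (\<forall>q'. q' \<ge> 0 \<longrightarrow> p q' \<ge> c \<longrightarrow> (p q' - c) * q' \<le> (p q - c) * q)"

(* The RS-game; qS S is the fixed optimal solution for coalition S, qc i the one for retailer i. *)
definition rs_game :: "real \<Rightarrow> (real \<Rightarrow> real) \<Rightarrow> (nat \<Rightarrow> real \<Rightarrow> real)
     \<Rightarrow> (nat set \<Rightarrow> nat \<Rightarrow> real) \<Rightarrow> (nat \<Rightarrow> real) \<Rightarrow> nat set \<Rightarrow> real" where
  "rs_game c w P qS qc T =
     (if 0 \<in> T then (\<Sum>i\<in>T - {0}. retailer_profit (P i) (qc i) c)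
      else (\<Sum>i\<in>T. retailer_profit (P i) (qS T i) (w (sum (qS T) T))))"

definition core :: "nat set \<Rightarrow> (nat set \<Rightarrow> real) \<Rightarrow> (nat \<Rightarrow> real) set" where
  "core Nz v = {x. sum x Nz = v Nz \<and> (\<forall>T. T \<subset> Nz \<longrightarrow> sum x T \<ge> v T)}"

end

theory Submission
  imports Defs
begin

text \<open>Give the supplier nothing and every retailer i the profit it makes in the grand
coalition, where it buys at cost c and sells its optimal quantity. A coalition containing
the supplier obtains exactly this. A coalition S of retailers alone buys at the wholesale
price w(q_S), which exceeds c; so each of its members earns at most what it would earn at
price c with the same quantity, and hence at most its optimal profit at price c.\<close>

definition cooperative_allocation :: "real \<Rightarrow> (nat \<Rightarrow> real \<Rightarrow> real) \<Rightarrow> (nat \<Rightarrow> real) \<Rightarrow> nat \<Rightarrow> real"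
  where "cooperative_allocation c P qc i = (if i = 0 then 0 else retailer_profit (P i) (qc i) c)"

lemma sum_cooperative_allocation:
  assumes "finite T"
  shows "sum (cooperative_allocation c P qc) T = (\<Sum>i\<in>T - {0}. retailer_profit (P i) (qc i) c)"
proof -
  have "sum (cooperative_allocation c P qc) T = sum (cooperative_allocation c P qc) (T - {0})"
    using assms by (cases "0 \<in> T") (simp_all add: sum.remove cooperative_allocation_def)
  also have "\<dots> = (\<Sum>i\<in>T - {0}. retailer_profit (P i) (qc i) c)"
    by (rule sum.cong) (simp_all add: cooperative_allocation_def)
  finally show ?thesis .
qed

lemma retailer_profit_le_coop_optimal:
  assumes "coop_optimal c p q\<^sub>c" and "c \<le> \<omega>" and "0 \<le> q" and "\<omega> \<le> p q"
  shows "retailer_profit p q \<omega> \<le> retailer_profit p q\<^sub>c c"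
proof -
  have "(p q - \<omega>) * q \<le> (p q - c) * q"
    using assms(2,3) by (intro mult_right_mono) auto
  also have "\<dots> \<le> (p q\<^sub>c - c) * q\<^sub>c"
    using assms unfolding coop_optimal_def by auto
  finally show ?thesis
    unfolding retailer_profit_def .
qed

lemma wholesale_price_above_cost:
  assumes "rs_situation n c w P" and "S \<subseteq> {1..n}" and "S \<noteq> {}" and "coal_feasible w P S q"
  shows "c < w (sum q S)"
proof -
  obtain i where "i \<in> S"
    using assms(3) by blast
  then have "rs_problem c w (P i)"
    using assms(1,2) unfolding rs_situation_def by blast
  moreover have "0 \<le> sum q S"
    using assms(4) unfolding coal_feasible_def by (simp add: sum_nonneg)
  ultimately show ?thesis
    unfolding rs_problem_def by blast
qed

lemma rs_game_retailers_le_coop_profits: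
  assumes "rs_situation n c w P"
    and "coal_optimal w P S (qS S)"
    and "\<And>i. i \<in> S \<Longrightarrow> coop_optimal c (P i) (qc i)"
    and "S \<subseteq> {1..n}" and "S \<noteq> {}"
  shows "rs_game c w P qS qc S \<le> (\<Sum>i\<in>S. retailer_profit (P i) (qc i) c)"
proof -
  have feasible: "coal_feasible w P S (qS S)"
    using assms(2) unfolding coal_optimal_def by blast
  have price: "c < w (sum (qS S) S)"
    using wholesale_price_above_cost[OF assms(1,4,5) feasible] .
  have "0 \<notin> S"
    using assms(4) by auto
  then have "rs_game c w P qS qc S = (\<Sum>i\<in>S. retailer_profit (P i) (qS S i) (w (sum (qS S) S)))"
    by (simp add: rs_game_def)
  also have "\<dots> \<le> (\<Sum>i\<in>S. retailer_profit (P i) (qc i) c)"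
  proof (rule sum_mono)
    fix i assume "i \<in> S"
    then show "retailer_profit (P i) (qS S i) (w (sum (qS S) S)) \<le> retailer_profit (P i) (qc i) c"
      using assms(3) feasible price
      by (intro retailer_profit_le_coop_optimal) (auto simp: coal_feasible_def)
  qed
  finally show ?thesis .
qed

lemma rs_game_le_cooperative_allocation:
  assumes "rs_situation n c w P"
    and "\<And>S. S \<subseteq> {1..n} \<Longrightarrow> S \<noteq> {} \<Longrightarrow> coal_optimal w P S (qS S)"
    and "\<And>i. i \<in> {1..n} \<Longrightarrow> coop_optimal c (P i) (qc i)"
    and "T \<subseteq> {0..n}"
  shows "rs_game c w P qS qc T \<le> sum (cooperative_allocation c P qc) T"
proof -
  have finite: "finite T"
    using assms(4) finite_subset by blast
  have "T \<subseteq> {1..n}" if "0 \<notin> T"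
    using assms(4) that by (auto simp: subset_eq Suc_le_eq) (metis gr0I)
  then consider "0 \<in> T" | "T = {}" | "T \<subseteq> {1..n}" "T \<noteq> {}"
    by blast
  then show ?thesis
  proof cases
    case 1
    then show ?thesis
      by (simp add: rs_game_def sum_cooperative_allocation[OF finite])
  next
    case 2
    then show ?thesis
      by (simp add: rs_game_def)
  next
    case 3
    have "coop_optimal c (P i) (qc i)" if "i \<in> T" for i
      using assms(3) 3 that by blast
    then have "rs_game c w P qS qc T \<le> (\<Sum>i\<in>T. retailer_profit (P i) (qc i) c)"
      using rs_game_retailers_le_coop_profits[where qS = qS, OF assms(1) assms(2)[OF 3] _ 3] by blast
    moreover have "T - {0} = T"
      using 3 by auto
    ultimately show ?thesis
      by (simp add: sum_cooperative_allocation[OF finite])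
  qed
qed

theorem theorem5p2:
  fixes n :: nat and c :: real and w :: "real \<Rightarrow> real" and P :: "nat \<Rightarrow> real \<Rightarrow> real"
    and qS :: "nat set \<Rightarrow> nat \<Rightarrow> real" and qc :: "nat \<Rightarrow> real"
  assumes "rs_situation n c w P"
    and "\<And>S. S \<subseteq> {1..n} \<Longrightarrow> S \<noteq> {} \<Longrightarrow> coal_optimal w P S (qS S)"
    and "\<And>i. i \<in> {1..n} \<Longrightarrow> coop_optimal c (P i) (qc i)"
  shows "core {0..n} (rs_game c w P qS qc) \<noteq> {}"
proof -
  let ?x = "cooperative_allocation c P qc"
  have "sum ?x {0..n} = rs_game c w P qS qc {0..n}"
    by (simp add: rs_game_def sum_cooperative_allocation)
  moreover have "rs_game c w P qS qc T \<le> sum ?x T" if "T \<subset> {0..n}" for T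
    using rs_game_le_cooperative_allocation[OF assms] that by blast
  ultimately have "?x \<in> core {0..n} (rs_game c w P qS qc)"
    unfolding core_def by blast
  then show ?thesis
    by blast
qed

end
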